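(* Let $p,s\in\mathbf R$ with $s>0$. For a positive integer $n$, an arbitrary $n\times n$ complex matrix $H$ and a positive semidefinite $n\times n$ matrix $L$, define on positive definite $n\times n$ matrices $A$ \[ \psi_{L,H}(A)=\operatorname{Tr}\bigl(L+H^*A^pH\bigr)^s . \] Then the following are equivalent: (i) for every $n$, every $n\times n$ matrix $H$ and every positive semidefinite $n\times n$ matrix $L$, the map $A\mapsto\psi_{L,H}(A)$ is convex; (ii) for every $n$ and every $n\times n$ matrix $H$, the map $A\mapsto\psi_{0,H}(A)$ is convex. The same equivalence holds with "convex" replaced by "concave".
   Context: $A^p$ is defined by functional calculus for positive definite $A$; for a positive semidefinite matrix $M$ and $s>0$, $M^s$ is defined by functional calculus with the convention $0^s=0$. *)

theory Defs
  imports Complex_Main "Jordan_Normal_Form.Schur_Decomposition"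
begin

definition mtrace :: "complex mat \<Rightarrow> complex" where
  "mtrace A = (\<Sum>i<dim_row A. A $$ (i, i))"

definition hermitian_n :: "nat \<Rightarrow> complex mat \<Rightarrow> bool" where
  "hermitian_n n A \<longleftrightarrow> A \<in> carrier_mat n n \<and> mat_adjoint A = A"

definition psd_n :: "nat \<Rightarrow> complex mat \<Rightarrow> bool" where
  "psd_n n A \<longleftrightarrow> hermitian_n n A \<and>
     (\<forall>v \<in> carrier_vec n. 0 \<le> Re (conjugate v \<bullet> (A *\<^sub>v v)))"

definition pd_n :: "nat \<Rightarrow> complex mat \<Rightarrow> bool" where
  "pd_n n A \<longleftrightarrow> hermitian_n n A \<and>
     (\<forall>v \<in> carrier_vec n. v \<noteq> 0\<^sub>v n \<longrightarrow> 0 < Re (conjugate v \<bullet> (A *\<^sub>v v)))"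

definition unitary_n :: "nat \<Rightarrow> complex mat \<Rightarrow> bool" where
  "unitary_n n U \<longleftrightarrow> U \<in> carrier_mat n n \<and> mat_adjoint U * U = 1\<^sub>m n"

definition diag_real :: "nat \<Rightarrow> (nat \<Rightarrow> real) \<Rightarrow> complex mat" where
  "diag_real n d = mat n n (\<lambda>(i, j). if i = j then complex_of_real (d i) else 0)"

text \<open>Functional calculus for a Hermitian matrix via its spectral decomposition
  A = U diag(d) U*; the result U diag(f o d) U* is independent of the decomposition.\<close>
definition matfun :: "nat \<Rightarrow> (real \<Rightarrow> real) \<Rightarrow> complex mat \<Rightarrow> complex mat" where
  "matfun n f A = (THE B. \<exists>U d. unitary_n n U \<and>
       A = U * diag_real n d * mat_adjoint U \<and>
       B = U * diag_real n (f \<circ> d) * mat_adjoint U)"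

text \<open>Real powers: x powr a, with 0 powr a = 0 (matching the convention 0^s = 0).\<close>
definition mpow :: "nat \<Rightarrow> complex mat \<Rightarrow> real \<Rightarrow> complex mat" where
  "mpow n A a = matfun n (\<lambda>x. x powr a) A"

definition psi :: "nat \<Rightarrow> real \<Rightarrow> real \<Rightarrow> complex mat \<Rightarrow> complex mat \<Rightarrow> complex mat \<Rightarrow> real" where
  "psi n p s L H A = Re (mtrace (mpow n (L + mat_adjoint H * mpow n A p * H) s))"

definition convex_on_pd :: "nat \<Rightarrow> (complex mat \<Rightarrow> real) \<Rightarrow> bool" where
  "convex_on_pd n \<phi> \<longleftrightarrow> (\<forall>A B t. pd_n n A \<longrightarrow> pd_n n B \<longrightarrow> 0 \<le> t \<longrightarrow> t \<le> 1 \<longrightarrow>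
     \<phi> (complex_of_real t \<cdot>\<^sub>m A + complex_of_real (1 - t) \<cdot>\<^sub>m B) \<le> t * \<phi> A + (1 - t) * \<phi> B)"

definition concave_on_pd :: "nat \<Rightarrow> (complex mat \<Rightarrow> real) \<Rightarrow> bool" where
  "concave_on_pd n \<phi> \<longleftrightarrow> (\<forall>A B t. pd_n n A \<longrightarrow> pd_n n B \<longrightarrow> 0 \<le> t \<longrightarrow> t \<le> 1 \<longrightarrow>
     t * \<phi> A + (1 - t) * \<phi> B \<le> \<phi> (complex_of_real t \<cdot>\<^sub>m A + complex_of_real (1 - t) \<cdot>\<^sub>m B))"

end

theory Submission
  imports Defs
begin

text \<open>Factor L = K^* K and dilate: for the 2n x 2n matrix H' = [[H, 0], [K, 0]] one has
  H'^* (A \<oplus> I)^p H' = (L + H^* A^p H) \<oplus> 0, hence psi_{L,H}(A) = psi_{0,H'}(A \<oplus> I).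
  As A \<mapsto> A \<oplus> I is affine and preserves positive definiteness, convexity (concavity) of
  psi_{0,H'} in dimension 2n passes to psi_{L,H}; the converse is the case L = 0.
  Computing with the functional calculus requires the spectral theorem for Hermitian matrices
  and the independence of f(A) from the chosen diagonalisation.\<close>

lemma dim_mat_adjoint [simp]:
  "dim_row (mat_adjoint A) = dim_col A" "dim_col (mat_adjoint A) = dim_row A"
  by (auto simp: mat_adjoint_def)

lemma index_mat_adjoint [simp]:
  "i < dim_col A \<Longrightarrow> j < dim_row A \<Longrightarrow> mat_adjoint A $$ (i, j) = cnj (A $$ (j, i))"
  by (auto simp: mat_adjoint_def mat_of_rows_def)

lemma mat_adjoint_carrier [simp]: "A \<in> carrier_mat n m \<Longrightarrow> mat_adjoint A \<in> carrier_mat m n"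
  by auto

lemma mult_carrier_mat_square [simp]:
  "A \<in> carrier_mat n n \<Longrightarrow> B \<in> carrier_mat n n \<Longrightarrow> A * B \<in> carrier_mat n n"
  by auto

lemma mat_adjoint_adjoint [simp]: "mat_adjoint (mat_adjoint (A :: complex mat)) = A"
  by (rule eq_matI) auto

lemma mat_adjoint_mult:
  fixes A B :: "complex mat"
  assumes "A \<in> carrier_mat n k" "B \<in> carrier_mat k m"
  shows "mat_adjoint (A * B) = mat_adjoint B * mat_adjoint A"
  by (rule eq_matI)
    (use assms in \<open>auto simp: scalar_prod_def cnj_sum mult.commute intro!: sum.cong\<close>)

lemma mat_adjoint_add:
  fixes A B :: "complex mat"
  assumes "A \<in> carrier_mat n m" "B \<in> carrier_mat n m"
  shows "mat_adjoint (A + B) = mat_adjoint A + mat_adjoint B"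
  by (rule eq_matI) (use assms in auto)

lemma mat_adjoint_smult: "mat_adjoint (c \<cdot>\<^sub>m A) = cnj c \<cdot>\<^sub>m mat_adjoint A"
  by (rule eq_matI) auto

lemma mat_adjoint_one [simp]: "mat_adjoint (1\<^sub>m n :: complex mat) = 1\<^sub>m n"
  by (rule eq_matI) auto

lemma diag_real_carrier [simp]: "diag_real n d \<in> carrier_mat n n"
  and dim_diag_real [simp]: "dim_row (diag_real n d) = n" "dim_col (diag_real n d) = n"
  by (auto simp: diag_real_def)

lemma index_diag_real [simp]:
  "i < n \<Longrightarrow> j < n \<Longrightarrow> diag_real n d $$ (i, j) = (if i = j then complex_of_real (d i) else 0)"
  by (auto simp: diag_real_def)

lemma mat_adjoint_diag_real [simp]: "mat_adjoint (diag_real n d) = diag_real n d"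
  by (rule eq_matI) auto

lemma one_mat_eq_diag_real: "1\<^sub>m n = diag_real n (\<lambda>_. 1)"
  by (rule eq_matI) auto

lemma zero_mat_eq_diag_real: "0\<^sub>m n n = diag_real n (\<lambda>_. 0)"
  by (rule eq_matI) auto

lemma index_mult_diag_real_right:
  fixes X :: "complex mat"
  assumes "X \<in> carrier_mat m n" "i < m" "j < n"
  shows "(X * diag_real n d) $$ (i, j) = X $$ (i, j) * complex_of_real (d j)"
proof -
  have "(X * diag_real n d) $$ (i, j)
      = (\<Sum>l<n. X $$ (i, l) * (if l = j then complex_of_real (d j) else 0))"
    using assms by (auto simp: scalar_prod_def atLeast0LessThan intro!: sum.cong)
  also have "\<dots> = X $$ (i, j) * complex_of_real (d j)"
    using assms by (simp add: if_distrib cong: if_cong)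
  finally show ?thesis .
qed

lemma index_mult_diag_real_left:
  fixes X :: "complex mat"
  assumes "X \<in> carrier_mat n m" "i < n" "j < m"
  shows "(diag_real n d * X) $$ (i, j) = complex_of_real (d i) * X $$ (i, j)"
proof -
  have "(diag_real n d * X) $$ (i, j)
      = (\<Sum>l<n. (if i = l then complex_of_real (d i) else 0) * X $$ (l, j))"
    using assms by (auto simp: scalar_prod_def atLeast0LessThan intro!: sum.cong)
  also have "\<dots> = (\<Sum>l<n. if l = i then complex_of_real (d i) * X $$ (l, j) else 0)"
    by (rule sum.cong) auto
  also have "\<dots> = complex_of_real (d i) * X $$ (i, j)"
    using assms by simp
  finally show ?thesis .
qed

lemma diag_real_mult: "diag_real n d * diag_real n e = diag_real n (\<lambda>i. d i * e i)"
proof (rule eq_matI)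
  fix i j assume "i < dim_row (diag_real n (\<lambda>i. d i * e i))" "j < dim_col (diag_real n (\<lambda>i. d i * e i))"
  then show "(diag_real n d * diag_real n e) $$ (i, j) = diag_real n (\<lambda>i. d i * e i) $$ (i, j)"
    by (subst index_mult_diag_real_left[OF diag_real_carrier]) auto
qed auto

lemma unitary_n_carrier: "unitary_n n U \<Longrightarrow> U \<in> carrier_mat n n"
  unfolding unitary_n_def by auto

lemma unitary_n_adjoint_mult: "unitary_n n U \<Longrightarrow> mat_adjoint U * U = 1\<^sub>m n"
  unfolding unitary_n_def by auto

lemma unitary_n_mult_adjoint: "unitary_n n U \<Longrightarrow> U * mat_adjoint U = 1\<^sub>m n"
  unfolding unitary_n_def using mat_mult_left_right_inverse[of "mat_adjoint U" n U] by auto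

lemma unitary_n_cancel_left:
  "unitary_n n U \<Longrightarrow> X \<in> carrier_mat n k \<Longrightarrow> mat_adjoint U * (U * X) = X"
  using unitary_n_adjoint_mult[of n U] unitary_n_carrier[of n U]
  by (simp add: assoc_mult_mat[symmetric, of _ n n _ n _ k])

lemma unitary_n_cancel_left':
  "unitary_n n U \<Longrightarrow> X \<in> carrier_mat n k \<Longrightarrow> U * (mat_adjoint U * X) = X"
  using unitary_n_mult_adjoint[of n U] unitary_n_carrier[of n U]
  by (simp add: assoc_mult_mat[symmetric, of _ n n _ n _ k])

lemma unitary_n_one: "unitary_n n (1\<^sub>m n)"
  unfolding unitary_n_def by auto

lemma unitary_n_mult:
  assumes U: "unitary_n n U" and V: "unitary_n n V"
  shows "unitary_n n (U * V)"
proof -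
  have c: "U \<in> carrier_mat n n" "V \<in> carrier_mat n n"
    using U V unitary_n_carrier by auto
  have "mat_adjoint (U * V) * (U * V) = mat_adjoint V * (mat_adjoint U * (U * V))"
    using c by (simp add: mat_adjoint_mult[of _ n n _ n] assoc_mult_mat[of _ n n _ n _ n])
  also have "\<dots> = 1\<^sub>m n"
    using unitary_n_cancel_left[OF U c(2)] unitary_n_adjoint_mult[OF V] by simp
  finally show ?thesis unfolding unitary_n_def using c by auto
qed

lemma hermitian_n_unitary_conj:
  assumes A: "hermitian_n n A" and W: "W \<in> carrier_mat n n"
  shows "hermitian_n n (mat_adjoint W * A * W)"
proof -
  have Ac: "A \<in> carrier_mat n n" "mat_adjoint A = A"
    using A unfolding hermitian_n_def by auto
  have "mat_adjoint (mat_adjoint W * A * W) = mat_adjoint W * mat_adjoint (mat_adjoint W * A)"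
    using Ac W mat_adjoint_mult[of "mat_adjoint W * A" n n W n]
      mult_carrier_mat[of "mat_adjoint W" n n A n] by simp
  also have "\<dots> = mat_adjoint W * (A * W)"
    using Ac W by (simp add: mat_adjoint_mult[of _ n n _ n])
  finally show ?thesis
    unfolding hermitian_n_def using Ac W by (simp add: assoc_mult_mat[of _ n n _ n _ n])
qed

lemma hermitian_n_diag_conj:
  assumes U: "U \<in> carrier_mat n n"
  shows "hermitian_n n (U * diag_real n d * mat_adjoint U)"
  using hermitian_n_unitary_conj[of n "diag_real n d" "mat_adjoint U"] U
  by (simp add: hermitian_n_def)

lemma hermitian_n_convex_comb:
  assumes "hermitian_n n A" "hermitian_n n B"
  shows "hermitian_n n (complex_of_real t \<cdot>\<^sub>m A + complex_of_real (1 - t) \<cdot>\<^sub>m B)"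
  using assms unfolding hermitian_n_def by (auto simp: mat_adjoint_add[of _ n n] mat_adjoint_smult)

section \<open>The functional calculus\<close>

text \<open>W = V^* U intertwines diag d and diag e, so W_ij \<noteq> 0 only where d_j = e_i;
  hence W also intertwines diag (f \<circ> d) and diag (f \<circ> e).\<close>
lemma unitary_diag_conj_fun_eq:
  assumes U: "unitary_n n U" and V: "unitary_n n V"
    and eq: "U * diag_real n d * mat_adjoint U = V * diag_real n e * mat_adjoint V"
  shows "U * diag_real n (f \<circ> d) * mat_adjoint U = V * diag_real n (f \<circ> e) * mat_adjoint V"
proof -
  have Uc: "U \<in> carrier_mat n n" and Vc: "V \<in> carrier_mat n n"
    using U V unitary_n_carrier by auto
  define W where "W = mat_adjoint V * U"
  have Wc: "W \<in> carrier_mat n n" unfolding W_def using Uc Vc by auto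
  have WD: "W * diag_real n d = diag_real n e * W"
  proof -
    have "W * diag_real n d = mat_adjoint V * (U * diag_real n d * mat_adjoint U) * U"
      unfolding W_def using Uc Vc unitary_n_adjoint_mult[OF U]
      by (simp add: assoc_mult_mat[of _ n n _ n _ n])
    also have "\<dots> = mat_adjoint V * (V * diag_real n e * mat_adjoint V) * U"
      using eq by simp
    also have "\<dots> = diag_real n e * W"
      unfolding W_def using Uc Vc
      by (simp add: assoc_mult_mat[of _ n n _ n _ n] unitary_n_cancel_left[OF V, of _ n])
    finally show ?thesis .
  qed
  have WF: "W * diag_real n (f \<circ> d) = diag_real n (f \<circ> e) * W"
  proof (rule eq_matI)
    fix i j assume "i < dim_row (diag_real n (f \<circ> e) * W)" "j < dim_col (diag_real n (f \<circ> e) * W)"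
    then have i: "i < n" and j: "j < n" using Wc by auto
    have "W $$ (i, j) * complex_of_real (d j) = complex_of_real (e i) * W $$ (i, j)"
      using arg_cong[OF WD, of "\<lambda>M. M $$ (i, j)"]
      by (simp add: index_mult_diag_real_right[OF Wc i j] index_mult_diag_real_left[OF Wc i j])
    then have "W $$ (i, j) = 0 \<or> d j = e i"
      by (metis mult.commute mult_cancel_left of_real_eq_iff)
    then show "(W * diag_real n (f \<circ> d)) $$ (i, j) = (diag_real n (f \<circ> e) * W) $$ (i, j)"
      using index_mult_diag_real_right[OF Wc i j] index_mult_diag_real_left[OF Wc i j]
      by (auto simp: mult.commute)
  qed (use Wc in auto)
  have "U * diag_real n (f \<circ> d) * mat_adjoint U = V * (W * diag_real n (f \<circ> d)) * mat_adjoint U"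
    unfolding W_def using Uc Vc unitary_n_cancel_left'[OF V, of "U * diag_real n (f \<circ> d)" n]
    by (simp add: assoc_mult_mat[of _ n n _ n _ n])
  also have "\<dots> = V * diag_real n (f \<circ> e) * mat_adjoint V * (U * mat_adjoint U)"
    unfolding WF unfolding W_def using Uc Vc by (simp add: assoc_mult_mat[of _ n n _ n _ n])
  also have "\<dots> = V * diag_real n (f \<circ> e) * mat_adjoint V"
    using unitary_n_mult_adjoint[OF U] Vc by simp
  finally show ?thesis .
qed

lemma matfun_unitary_diag:
  assumes U: "unitary_n n U" and A: "A = U * diag_real n d * mat_adjoint U"
  shows "matfun n f A = U * diag_real n (f \<circ> d) * mat_adjoint U"
  unfolding matfun_def
proof (rule the_equality)
  show "\<exists>U' d'. unitary_n n U' \<and> A = U' * diag_real n d' * mat_adjoint U' \<and>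
      U * diag_real n (f \<circ> d) * mat_adjoint U = U' * diag_real n (f \<circ> d') * mat_adjoint U'"
    using U A by blast
next
  fix B assume "\<exists>U' d'. unitary_n n U' \<and> A = U' * diag_real n d' * mat_adjoint U' \<and>
      B = U' * diag_real n (f \<circ> d') * mat_adjoint U'"
  then show "B = U * diag_real n (f \<circ> d) * mat_adjoint U"
    using unitary_diag_conj_fun_eq[OF U, of _ d _ f] A by metis
qed

lemma matfun_diag_real_const: "matfun n f (diag_real n (\<lambda>_. c)) = diag_real n (\<lambda>_. f c)"
proof -
  have "diag_real n (\<lambda>_. c) = 1\<^sub>m n * diag_real n (\<lambda>_. c) * mat_adjoint (1\<^sub>m n)"
    by simp
  from matfun_unitary_diag[OF unitary_n_one this] show ?thesis
    by (simp add: comp_def)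
qed

abbreviation block_diag :: "nat \<Rightarrow> nat \<Rightarrow> complex mat \<Rightarrow> complex mat \<Rightarrow> complex mat" where
  "block_diag n m X Y \<equiv> four_block_mat X (0\<^sub>m n m) (0\<^sub>m m n) Y"

lemma block_diag_mult:
  assumes "X \<in> carrier_mat n n" "Y \<in> carrier_mat m m" "X' \<in> carrier_mat n n" "Y' \<in> carrier_mat m m"
  shows "block_diag n m X Y * block_diag n m X' Y' = block_diag n m (X * X') (Y * Y')"
  using assms
  by (subst mult_four_block_mat[where ?n1.0=n and ?n2.0=m])
    (auto simp: right_mult_zero_mat[of _ n n] right_mult_zero_mat[of _ m m]
      left_mult_zero_mat[of _ n n] left_mult_zero_mat[of _ m m] intro!: cong_four_block_mat)

lemma mat_adjoint_block_diag:
  assumes "X \<in> carrier_mat n n" "Y \<in> carrier_mat m m"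
  shows "mat_adjoint (block_diag n m X Y) = block_diag n m (mat_adjoint X) (mat_adjoint Y)"
  by (rule eq_matI) (use assms in auto)

lemma diag_real_eq_block_diag:
  "diag_real (n + m) (\<lambda>i. if i < n then d i else e (i - n)) = block_diag n m (diag_real n d) (diag_real m e)"
  by (rule eq_matI) auto

lemma unitary_n_block_diag:
  assumes U: "unitary_n n U" and V: "unitary_n m V"
  shows "unitary_n (n + m) (block_diag n m U V)"
  using unitary_n_carrier[OF U] unitary_n_carrier[OF V]
  unfolding unitary_n_def
  by (simp add: mat_adjoint_block_diag block_diag_mult unitary_n_adjoint_mult[OF U]
      unitary_n_adjoint_mult[OF V])

lemma block_diag_unitary_diag_conj:
  assumes U: "unitary_n n U" and V: "unitary_n m V"
  shows "block_diag n m (U * diag_real n d * mat_adjoint U) (V * diag_real m e * mat_adjoint V) =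
    block_diag n m U V * diag_real (n + m) (\<lambda>i. if i < n then d i else e (i - n))
      * mat_adjoint (block_diag n m U V)"
  using unitary_n_carrier[OF U] unitary_n_carrier[OF V]
  by (simp add: diag_real_eq_block_diag mat_adjoint_block_diag block_diag_mult)

lemma matfun_block_diag:
  assumes U: "unitary_n n U" and V: "unitary_n m V"
    and X: "X = U * diag_real n d * mat_adjoint U" and Y: "Y = V * diag_real m e * mat_adjoint V"
  shows "matfun (n + m) f (block_diag n m X Y) = block_diag n m (matfun n f X) (matfun m f Y)"
proof -
  have "(f \<circ> (\<lambda>i. if i < n then d i else e (i - n))) = (\<lambda>i. if i < n then (f \<circ> d) i else (f \<circ> e) (i - n))"
    by auto
  then have "matfun (n + m) f (block_diag n m X Y) = block_diag n m
      (U * diag_real n (f \<circ> d) * mat_adjoint U) (V * diag_real m (f \<circ> e) * mat_adjoint V)"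
    using matfun_unitary_diag[OF unitary_n_block_diag[OF U V]]
    by (simp add: X Y block_diag_unitary_diag_conj[OF U V])
  then show ?thesis
    using matfun_unitary_diag[OF U X] matfun_unitary_diag[OF V Y] by simp
qed

section \<open>The spectral theorem for Hermitian matrices\<close>

lemma complex_mat_has_eigenvector:
  fixes A :: "complex mat"
  assumes A: "A \<in> carrier_mat n n" and n: "n > 0"
  obtains e v where "v \<in> carrier_vec n" "v \<noteq> 0\<^sub>v n" "A *\<^sub>v v = e \<cdot>\<^sub>v v"
proof -
  obtain es where cp: "char_poly A = (\<Prod>a \<leftarrow> es. [:- a, 1:])" "length es = n"
    using char_poly_factorized[OF A] by blast
  then obtain e es' where "es = e # es'" using n by (cases es) auto
  then have "poly (char_poly A) e = 0" unfolding cp by simp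
  then have "eigenvalue A e" using eigenvalue_root_char_poly[OF A] by simp
  then show ?thesis using that A unfolding eigenvalue_def eigenvector_def by auto
qed

definition vec_normalize :: "complex vec \<Rightarrow> complex vec" where
  "vec_normalize w = complex_of_real (1 / sqrt (Re (w \<bullet>c w))) \<cdot>\<^sub>v w"

lemma vec_normalize_carrier [simp]: "w \<in> carrier_vec n \<Longrightarrow> vec_normalize w \<in> carrier_vec n"
  unfolding vec_normalize_def by auto

lemma inner_prod_smult_real:
  assumes "w \<in> carrier_vec n" "w' \<in> carrier_vec n"
  shows "(complex_of_real a \<cdot>\<^sub>v w) \<bullet>c (complex_of_real b \<cdot>\<^sub>v w') = complex_of_real (a * b) * (w \<bullet>c w')"
  using assms by (simp add: conjugate_smult_vec[of "complex_of_real b"])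

lemma vec_normalize_unit:
  assumes w: "w \<in> carrier_vec n" and nz: "w \<noteq> 0\<^sub>v n"
  shows "vec_normalize w \<bullet>c vec_normalize w = 1"
proof -
  let ?r = "Re (w \<bullet>c w)"
  have r: "w \<bullet>c w = complex_of_real ?r" "?r > 0"
    using conjugate_square_ge_0_vec[of w] conjugate_square_eq_0_vec[OF w] nz
    by (auto simp: less_eq_complex_def complex_eq_iff)
  have "vec_normalize w \<bullet>c vec_normalize w = complex_of_real (1 / sqrt ?r * (1 / sqrt ?r) * ?r)"
    unfolding vec_normalize_def inner_prod_smult_real[OF w w] by (subst r(1)) simp
  also have "\<dots> = 1" using r(2) by simp
  finally show ?thesis .
qed

lemma vec_normalize_orthogonal:
  assumes "w \<in> carrier_vec n" "w' \<in> carrier_vec n" "w \<bullet>c w' = 0"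
  shows "vec_normalize w \<bullet>c vec_normalize w' = 0"
  unfolding vec_normalize_def inner_prod_smult_real[OF assms(1,2)] assms(3) by simp

lemma vec_normalize_id: "w \<bullet>c w = 1 \<Longrightarrow> vec_normalize w = w"
  unfolding vec_normalize_def by simp

lemma unitary_n_with_first_col:
  assumes v: "v \<in> carrier_vec n" and v1: "v \<bullet>c v = 1"
  obtains W where "unitary_n n W" "col W 0 = v"
proof -
  have v0: "v \<noteq> 0\<^sub>v n" using v1 v by auto
  have n: "n > 0" using v0 v by (cases n) auto
  interpret cof_vec_space n "TYPE(complex)" .
  define b where "b = basis_completion v"
  from basis_completion[OF v v0, folded b_def]
  have b: "set b \<subseteq> carrier_vec n" "distinct b" "\<not> lin_dep (set b)" "length b = n" "hd b = v"
    by auto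
  then obtain vs where bv: "b = v # vs" using n by (cases b) auto
  define ws where "ws = gram_schmidt n b"
  from gram_schmidt_result[OF b(1) b(2) b(3) ws_def]
  have ws: "corthogonal ws" "set ws \<subseteq> carrier_vec n" "length ws = n" using b by auto
  define us where "us = map vec_normalize ws"
  have us: "set us \<subseteq> carrier_vec n" "length us = n" using ws unfolding us_def by auto
  have us_orthonormal: "us ! j \<bullet>c us ! i = (if i = j then 1 else 0)" if "i < n" "j < n" for i j
  proof -
    have "ws ! j \<in> carrier_vec n" "ws ! i \<in> carrier_vec n" "ws ! i \<noteq> 0\<^sub>v n"
      using ws that corthogonalD[OF ws(1), of i i] by auto
    moreover have "ws ! j \<bullet>c ws ! i = 0 \<longleftrightarrow> i \<noteq> j"
      using ws that by (auto simp: corthogonal_def)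
    ultimately show ?thesis
      unfolding us_def using that ws(3) vec_normalize_unit vec_normalize_orthogonal by auto
  qed
  define W where "W = mat_of_cols n us"
  have Wc: "W \<in> carrier_mat n n" unfolding W_def using us by auto
  have "mat_adjoint W * W = 1\<^sub>m n"
  proof (rule eq_matI)
    fix i j assume ij: "i < dim_row (1\<^sub>m n)" "j < dim_col (1\<^sub>m n)"
    have "us ! i \<in> carrier_vec n" "us ! j \<in> carrier_vec n" using ij us by auto
    then have "(mat_adjoint W * W) $$ (i, j) = us ! j \<bullet>c us ! i"
      using ij Wc us unfolding W_def
      by (auto simp: scalar_prod_def mat_of_cols_index atLeast0LessThan mult.commute intro!: sum.cong)
    then show "(mat_adjoint W * W) $$ (i, j) = 1\<^sub>m n $$ (i, j)"
      using us_orthonormal ij by auto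
  qed (use Wc in auto)
  moreover have "hd ws = v" unfolding ws_def bv using v by simp
  then have "col W 0 = v" unfolding W_def us_def using us ws n v1
    by (cases ws) (auto simp: vec_normalize_id)
  ultimately show ?thesis using that Wc unfolding unitary_n_def by auto
qed

lemma hermitian_n_first_col_block:
  assumes A: "hermitian_n (Suc m) A" and col0: "col A 0 = c \<cdot>\<^sub>v unit_vec (Suc m) 0"
  defines "A' \<equiv> mat m m (\<lambda>(i, j). A $$ (Suc i, Suc j))"
  shows "hermitian_n m A'" "A = block_diag 1 m (diag_real 1 (\<lambda>_. Re c)) A'"
proof -
  have Ac: "A \<in> carrier_mat (Suc m) (Suc m)" and Aa: "mat_adjoint A = A"
    using A unfolding hermitian_n_def by auto
  have sym: "A $$ (i, j) = cnj (A $$ (j, i))" if "i < Suc m" "j < Suc m" for i j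
    using arg_cong[OF Aa, of "\<lambda>M. M $$ (i, j)"] that Ac by simp
  have col_entry: "A $$ (i, 0) = (if i = 0 then c else 0)" if "i < Suc m" for i
    using arg_cong[OF col0, of "\<lambda>x. x $ i"] that Ac by auto
  have row_entry: "A $$ (0, j) = (if j = 0 then c else 0)" if "j < Suc m" for j
    using sym[OF _ that, of 0] col_entry[OF that] col_entry[of 0] by (auto simp: complex_eq_iff)
  have "c = complex_of_real (Re c)"
    using sym[of 0 0] col_entry[of 0] by (auto simp: complex_eq_iff)
  then show "A = block_diag 1 m (diag_real 1 (\<lambda>_. Re c)) A'"
    by (intro eq_matI) (use Ac col_entry row_entry in \<open>auto simp: A'_def less_Suc_eq_0_disj\<close>)
  show "hermitian_n m A'"
    unfolding hermitian_n_def
    by (auto intro!: eq_matI simp: A'_def sym[symmetric])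
qed

lemma hermitian_n_deflation:
  assumes A: "hermitian_n (Suc m) A"
  obtains W c where "unitary_n (Suc m) W" "col (mat_adjoint W * A * W) 0 = c \<cdot>\<^sub>v unit_vec (Suc m) 0"
proof -
  let ?n = "Suc m"
  have Ac: "A \<in> carrier_mat ?n ?n" using A unfolding hermitian_n_def by auto
  obtain c v where v: "v \<in> carrier_vec ?n" "v \<noteq> 0\<^sub>v ?n" "A *\<^sub>v v = c \<cdot>\<^sub>v v"
    using complex_mat_has_eigenvector[OF Ac] by blast
  define v1 where "v1 = vec_normalize v"
  have v1: "v1 \<in> carrier_vec ?n" "v1 \<bullet>c v1 = 1"
    unfolding v1_def using vec_normalize_unit[OF v(1,2)] v(1) by auto
  have Av1: "A *\<^sub>v v1 = c \<cdot>\<^sub>v v1"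
    unfolding v1_def vec_normalize_def using mult_mat_vec[OF Ac v(1)] v(3)
    by (simp add: smult_smult_assoc mult.commute)
  obtain W where W: "unitary_n ?n W" "col W 0 = v1"
    using unitary_n_with_first_col[OF v1] by blast
  have Wc: "W \<in> carrier_mat ?n ?n" using unitary_n_carrier[OF W(1)] .
  have "col (mat_adjoint W * A * W) 0 = (mat_adjoint W * A) *\<^sub>v v1"
    using Wc Ac W(2) by (subst col_mult2[of _ ?n ?n]) auto
  also have "\<dots> = c \<cdot>\<^sub>v (mat_adjoint W *\<^sub>v col W 0)"
    using Wc Ac Av1 v1 W(2) assoc_mult_mat_vec[of "mat_adjoint W" ?n ?n A ?n v1]
      mult_mat_vec[of "mat_adjoint W" ?n ?n v1 c] by simp
  also have "mat_adjoint W *\<^sub>v col W 0 = col (mat_adjoint W * W) 0"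
    using Wc by (subst col_mult2[of _ ?n ?n]) auto
  also have "\<dots> = unit_vec ?n 0" using unitary_n_adjoint_mult[OF W(1)] by simp
  finally show ?thesis using that W(1) by blast
qed

theorem hermitian_n_spectral:
  "hermitian_n n A \<Longrightarrow> \<exists>U d. unitary_n n U \<and> A = U * diag_real n d * mat_adjoint U"
proof (induction n arbitrary: A)
  case 0
  then have "A = 1\<^sub>m 0 * diag_real 0 (\<lambda>_. 0) * mat_adjoint (1\<^sub>m 0)"
    unfolding hermitian_n_def by (auto intro!: eq_matI)
  then show ?case using unitary_n_one by blast
next
  case (Suc m)
  let ?n = "Suc m"
  obtain W c where W: "unitary_n ?n W" and col0: "col (mat_adjoint W * A * W) 0 = c \<cdot>\<^sub>v unit_vec ?n 0"
    using hermitian_n_deflation[OF Suc.prems] by blast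
  have Wc: "W \<in> carrier_mat ?n ?n" using unitary_n_carrier[OF W] .
  have Ac: "A \<in> carrier_mat ?n ?n" using Suc.prems unfolding hermitian_n_def by auto
  define A' where "A' = mat_adjoint W * A * W"
  define A3 where "A3 = mat m m (\<lambda>(i, j). A' $$ (Suc i, Suc j))"
  have hA': "hermitian_n ?n A'"
    unfolding A'_def by (rule hermitian_n_unitary_conj[OF Suc.prems Wc])
  obtain U3 d3 where U3: "unitary_n m U3" "A3 = U3 * diag_real m d3 * mat_adjoint U3"
    using Suc.IH hermitian_n_first_col_block(1)[OF hA' col0[folded A'_def]] unfolding A3_def by blast
  define B where "B = block_diag 1 m (1\<^sub>m 1) U3"
  have B: "unitary_n ?n B"
    unfolding B_def using unitary_n_block_diag[OF unitary_n_one[of 1] U3(1)] by simp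
  have Bc: "B \<in> carrier_mat ?n ?n" using unitary_n_carrier[OF B] .
  define d where "d = (\<lambda>i. if i < 1 then Re c else d3 (i - 1))"
  have "A' = block_diag 1 m (1\<^sub>m 1 * diag_real 1 (\<lambda>_. Re c) * mat_adjoint (1\<^sub>m 1)) A3"
    using hermitian_n_first_col_block(2)[OF hA' col0[folded A'_def]] unfolding A3_def by simp
  also have "\<dots> = B * diag_real (1 + m) d * mat_adjoint B"
    unfolding U3(2) B_def d_def by (rule block_diag_unitary_diag_conj[OF unitary_n_one U3(1)])
  finally have A'_diag: "A' = B * diag_real ?n d * mat_adjoint B" by simp
  have "A = W * A' * mat_adjoint W"
    unfolding A'_def using Wc Ac unitary_n_mult_adjoint[OF W] unitary_n_cancel_left'[OF W Ac]
    by (simp add: assoc_mult_mat[of _ ?n ?n _ ?n _ ?n])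
  also have "\<dots> = (W * B) * diag_real ?n d * mat_adjoint (W * B)"
    unfolding A'_diag using Wc Bc
    by (simp add: mat_adjoint_mult[of _ ?n ?n _ ?n] assoc_mult_mat[of _ ?n ?n _ ?n _ ?n])
  finally show ?case using unitary_n_mult[OF W B] by blast
qed

lemma pd_n_hermitian_n: "pd_n n A \<Longrightarrow> hermitian_n n A"
  unfolding pd_n_def by auto

lemma pd_n_quadratic_form_nonneg:
  assumes A: "pd_n n A" and v: "v \<in> carrier_vec n"
  shows "0 \<le> Re (conjugate v \<bullet> (A *\<^sub>v v))"
proof (cases "v = 0\<^sub>v n")
  case True
  have "A \<in> carrier_mat n n" using A unfolding pd_n_def hermitian_n_def by auto
  then show ?thesis using True by simp
qed (use A v in \<open>auto simp: pd_n_def less_imp_le\<close>)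

lemma pd_n_one: "pd_n n (1\<^sub>m n)"
proof -
  have "0 < Re (conjugate v \<bullet> v)" if "v \<in> carrier_vec n" "v \<noteq> 0\<^sub>v n" for v :: "complex vec"
    using conjugate_square_greater_0_vec[of v n] conjugate_vec_sprod_comm[of v n v] that
    by (auto simp: less_complex_def)
  then show ?thesis unfolding pd_n_def hermitian_n_def by auto
qed

lemma conjugate_append_vec: "conjugate (a @\<^sub>v b) = conjugate a @\<^sub>v conjugate (b :: complex vec)"
  by (rule eq_vecI) auto

lemma zero_vec_append: "0\<^sub>v (n + m) = 0\<^sub>v n @\<^sub>v (0\<^sub>v m :: complex vec)"
  by (rule eq_vecI) auto

lemma pd_n_block_diag:
  assumes A: "pd_n n A" and B: "pd_n m B"
  shows "pd_n (n + m) (block_diag n m A B)"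
proof -
  have Ac: "A \<in> carrier_mat n n" "mat_adjoint A = A" and Bc: "B \<in> carrier_mat m m" "mat_adjoint B = B"
    using A B unfolding pd_n_def hermitian_n_def by auto
  have "0 < Re (conjugate (a @\<^sub>v b) \<bullet> (block_diag n m A B *\<^sub>v (a @\<^sub>v b)))"
    if a: "a \<in> carrier_vec n" and b: "b \<in> carrier_vec m" and nz: "a @\<^sub>v b \<noteq> 0\<^sub>v (n + m)" for a b
  proof -
    have "block_diag n m A B *\<^sub>v (a @\<^sub>v b) = (A *\<^sub>v a) @\<^sub>v (B *\<^sub>v b)"
      using Ac Bc a b by (subst four_block_mat_mult_vec[of _ n n _ m _ m]) auto
    then have "conjugate (a @\<^sub>v b) \<bullet> (block_diag n m A B *\<^sub>v (a @\<^sub>v b))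
        = conjugate a \<bullet> (A *\<^sub>v a) + conjugate b \<bullet> (B *\<^sub>v b)"
      using Ac Bc a b by (simp add: conjugate_append_vec scalar_prod_append[of _ n _ m])
    moreover have "a \<noteq> 0\<^sub>v n \<or> b \<noteq> 0\<^sub>v m" using nz zero_vec_append by metis
    ultimately show ?thesis
      using A B a b pd_n_quadratic_form_nonneg[OF A a] pd_n_quadratic_form_nonneg[OF B b]
      unfolding pd_n_def by (auto simp: add_pos_nonneg add_nonneg_pos)
  qed
  then show ?thesis
    unfolding pd_n_def hermitian_n_def using Ac Bc
    by (simp add: mat_adjoint_block_diag all_vec_append[where P = "\<lambda>v. v \<noteq> 0\<^sub>v (n + m) \<longrightarrow> _ v"])
qed

lemma block_diag_convex_comb:
  assumes "A \<in> carrier_mat n n" "B \<in> carrier_mat n n" "C \<in> carrier_mat m m"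
  shows "complex_of_real t \<cdot>\<^sub>m block_diag n m A C + complex_of_real (1 - t) \<cdot>\<^sub>m block_diag n m B C
    = block_diag n m (complex_of_real t \<cdot>\<^sub>m A + complex_of_real (1 - t) \<cdot>\<^sub>m B) C"
  by (rule eq_matI) (use assms in \<open>auto simp flip: distrib_right of_real_add\<close>)

lemma psd_n_zero: "psd_n n (0\<^sub>m n n)"
proof -
  have "0\<^sub>m n n *\<^sub>v v = 0\<^sub>v n" if "v \<in> carrier_vec n" for v :: "complex vec"
    by (rule eq_vecI) (use that in auto)
  then show ?thesis unfolding psd_n_def hermitian_n_def by auto
qed

lemma psd_n_square_root:
  assumes L: "psd_n n L"
  obtains K where "K \<in> carrier_mat n n" "mat_adjoint K * K = L"
proof -
  obtain U d where U: "unitary_n n U" "L = U * diag_real n d * mat_adjoint U"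
    using hermitian_n_spectral L unfolding psd_n_def by blast
  have Uc: "U \<in> carrier_mat n n" using unitary_n_carrier[OF U(1)] .
  have Lc: "L \<in> carrier_mat n n" using L unfolding psd_n_def hermitian_n_def by auto
  have D: "mat_adjoint U * (L * U) = diag_real n d"
    unfolding U(2) using Uc unitary_n_adjoint_mult[OF U(1)] unitary_n_cancel_left[OF U(1), of _ n]
    by (simp add: assoc_mult_mat[of _ n n _ n _ n])
  have d_nonneg: "d i \<ge> 0" if i: "i < n" for i
  proof -
    have "complex_of_real (d i) = row (mat_adjoint U) i \<bullet> col (L * U) i"
      using arg_cong[OF D, of "\<lambda>M. M $$ (i, i)"] i Uc Lc by simp
    also have "\<dots> = conjugate (col U i) \<bullet> (L *\<^sub>v col U i)"
      using i Uc Lc by (auto intro!: arg_cong2[where f = scalar_prod] eq_vecI col_mult2)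
    finally have "d i = Re (conjugate (col U i) \<bullet> (L *\<^sub>v col U i))"
      by (metis Re_complex_of_real)
    then show ?thesis using L Uc i unfolding psd_n_def by auto
  qed
  define K where "K = diag_real n (\<lambda>i. sqrt (d i)) * mat_adjoint U"
  have Kc: "K \<in> carrier_mat n n" unfolding K_def using Uc by auto
  have "mat_adjoint K * K = U * (diag_real n (\<lambda>i. sqrt (d i)) * diag_real n (\<lambda>i. sqrt (d i))) * mat_adjoint U"
    unfolding K_def using Uc
    by (simp add: mat_adjoint_mult[of _ n n _ n] assoc_mult_mat[of _ n n _ n _ n])
  also have "diag_real n (\<lambda>i. sqrt (d i)) * diag_real n (\<lambda>i. sqrt (d i)) = diag_real n d"
    unfolding diag_real_mult by (rule eq_matI) (auto simp: d_nonneg)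
  finally show ?thesis using that Kc U(2) by auto
qed

lemma mpow_hermitian_n:
  assumes "hermitian_n n C"
  shows "hermitian_n n (mpow n C a)"
proof -
  obtain U d where U: "unitary_n n U" "C = U * diag_real n d * mat_adjoint U"
    using hermitian_n_spectral[OF assms] by blast
  show ?thesis
    unfolding mpow_def matfun_unitary_diag[OF U] using hermitian_n_diag_conj unitary_n_carrier[OF U(1)] .
qed

lemma mpow_block_diag_const:
  assumes C: "hermitian_n n C"
  shows "mpow (n + m) (block_diag n m C (diag_real m (\<lambda>_. c))) a
    = block_diag n m (mpow n C a) (diag_real m (\<lambda>_. c powr a))"
proof -
  obtain U d where U: "unitary_n n U" "C = U * diag_real n d * mat_adjoint U"
    using hermitian_n_spectral[OF C] by blast
  have "diag_real m (\<lambda>_. c) = 1\<^sub>m m * diag_real m (\<lambda>_. c) * mat_adjoint (1\<^sub>m m)" by simp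
  from matfun_block_diag[OF U(1) unitary_n_one U(2) this] show ?thesis
    unfolding mpow_def matfun_diag_real_const by simp
qed

lemma mtrace_block_diag_zero:
  assumes "X \<in> carrier_mat n n"
  shows "mtrace (block_diag n m X (0\<^sub>m m m)) = mtrace X"
proof -
  have "mtrace (block_diag n m X (0\<^sub>m m m)) = (\<Sum>i<n + m. block_diag n m X (0\<^sub>m m m) $$ (i, i))"
    unfolding mtrace_def using assms by simp
  also have "\<dots> = (\<Sum>i<n. block_diag n m X (0\<^sub>m m m) $$ (i, i))
      + (\<Sum>i\<in>{n..<n + m}. block_diag n m X (0\<^sub>m m m) $$ (i, i))"
    by (simp add: sum.atLeastLessThan_concat[symmetric] lessThan_atLeast0)
  also have "(\<Sum>i\<in>{n..<n + m}. block_diag n m X (0\<^sub>m m m) $$ (i, i)) = 0"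
    using assms by (intro sum.neutral) auto
  also have "(\<Sum>i<n. block_diag n m X (0\<^sub>m m m) $$ (i, i)) = mtrace X"
    unfolding mtrace_def using assms by (intro sum.cong) auto
  finally show ?thesis by simp
qed

section \<open>The dilation\<close>

lemma psi_block_diag_one_dilation:
  assumes H: "H \<in> carrier_mat n n" and K: "K \<in> carrier_mat n n" and C: "hermitian_n n C"
  shows "psi (n + n) p s (0\<^sub>m (n + n) (n + n)) (four_block_mat H (0\<^sub>m n n) K (0\<^sub>m n n))
      (block_diag n n C (1\<^sub>m n))
    = psi n p s (mat_adjoint K * K) H C"
proof -
  let ?H' = "four_block_mat H (0\<^sub>m n n) K (0\<^sub>m n n)"
  define P where "P = mpow n C p"
  have Pc: "P \<in> carrier_mat n n" "mat_adjoint P = P"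
    using mpow_hermitian_n[OF C] unfolding P_def hermitian_n_def by auto
  define M where "M = mat_adjoint K * K + mat_adjoint H * P * H"
  have hM: "hermitian_n n M"
    unfolding hermitian_n_def M_def using H K Pc
    by (simp add: mat_adjoint_add[of _ n n] mat_adjoint_mult[of _ n n _ n] assoc_mult_mat[of _ n n _ n _ n])
  have Mc: "M \<in> carrier_mat n n" using hM unfolding hermitian_n_def by auto
  have "mpow (n + n) (block_diag n n C (1\<^sub>m n)) p = block_diag n n P (1\<^sub>m n)"
    using mpow_block_diag_const[OF C, of n 1 p] unfolding P_def one_mat_eq_diag_real by simp
  moreover have "mat_adjoint ?H' = four_block_mat (mat_adjoint H) (mat_adjoint K) (0\<^sub>m n n) (0\<^sub>m n n)"
    by (rule eq_matI) (use H K in auto)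
  moreover have "four_block_mat (mat_adjoint H) (mat_adjoint K) (0\<^sub>m n n) (0\<^sub>m n n)
      * block_diag n n P (1\<^sub>m n) = four_block_mat (mat_adjoint H * P) (mat_adjoint K) (0\<^sub>m n n) (0\<^sub>m n n)"
    using H K Pc
    by (subst mult_four_block_mat[where ?n1.0 = n and ?n2.0 = n]) (auto intro!: cong_four_block_mat)
  moreover have "four_block_mat (mat_adjoint H * P) (mat_adjoint K) (0\<^sub>m n n) (0\<^sub>m n n) * ?H'
      = block_diag n n M (0\<^sub>m n n)"
    unfolding M_def using H K Pc
    by (subst mult_four_block_mat[where ?n1.0 = n and ?n2.0 = n])
      (auto intro!: cong_four_block_mat simp: comm_add_mat[of _ n n])
  ultimately have "0\<^sub>m (n + n) (n + n) + mat_adjoint ?H' * mpow (n + n) (block_diag n n C (1\<^sub>m n)) p * ?H'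
      = block_diag n n M (0\<^sub>m n n)"
    using Mc by simp
  moreover have "mpow (n + n) (block_diag n n M (0\<^sub>m n n)) s = block_diag n n (mpow n M s) (0\<^sub>m n n)"
    using mpow_block_diag_const[OF hM, of n 0 s] by (simp add: zero_mat_eq_diag_real)
  moreover have "mpow n M s \<in> carrier_mat n n"
    using mpow_hermitian_n[OF hM] unfolding hermitian_n_def by auto
  ultimately show ?thesis
    unfolding psi_def M_def[symmetric] P_def[symmetric] by (simp add: mtrace_block_diag_zero)
qed

lemma convex_on_pd_block_diag_one:
  assumes conv: "convex_on_pd (n + m) \<Phi>"
    and \<phi>: "\<And>A. hermitian_n n A \<Longrightarrow> \<phi> A = \<Phi> (block_diag n m A (1\<^sub>m m))"
  shows "convex_on_pd n \<phi>"
  unfolding convex_on_pd_def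
proof (intro allI impI)
  fix A B and t :: real
  assume A: "pd_n n A" and B: "pd_n n B" and t: "0 \<le> t" "t \<le> 1"
  have hA: "hermitian_n n A" and hB: "hermitian_n n B"
    using A B by (simp_all add: pd_n_hermitian_n)
  then have "A \<in> carrier_mat n n" "B \<in> carrier_mat n n"
    unfolding hermitian_n_def by auto
  then have comb: "complex_of_real t \<cdot>\<^sub>m block_diag n m A (1\<^sub>m m)
      + complex_of_real (1 - t) \<cdot>\<^sub>m block_diag n m B (1\<^sub>m m)
    = block_diag n m (complex_of_real t \<cdot>\<^sub>m A + complex_of_real (1 - t) \<cdot>\<^sub>m B) (1\<^sub>m m)"
    by (rule block_diag_convex_comb) simp
  have "\<Phi> (complex_of_real t \<cdot>\<^sub>m block_diag n m A (1\<^sub>m m)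
      + complex_of_real (1 - t) \<cdot>\<^sub>m block_diag n m B (1\<^sub>m m))
    \<le> t * \<Phi> (block_diag n m A (1\<^sub>m m)) + (1 - t) * \<Phi> (block_diag n m B (1\<^sub>m m))"
    using conv pd_n_block_diag[OF A pd_n_one] pd_n_block_diag[OF B pd_n_one] t
    unfolding convex_on_pd_def by blast
  then show "\<phi> (complex_of_real t \<cdot>\<^sub>m A + complex_of_real (1 - t) \<cdot>\<^sub>m B) \<le> t * \<phi> A + (1 - t) * \<phi> B"
    unfolding comb \<phi>[OF hA] \<phi>[OF hB] \<phi>[OF hermitian_n_convex_comb[OF hA hB]] .
qed

lemma concave_on_pd_block_diag_one:
  assumes conc: "concave_on_pd (n + m) \<Phi>"
    and \<phi>: "\<And>A. hermitian_n n A \<Longrightarrow> \<phi> A = \<Phi> (block_diag n m A (1\<^sub>m m))"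
  shows "concave_on_pd n \<phi>"
proof -
  have "convex_on_pd (n + m) (\<lambda>X. - \<Phi> X)"
    using conc unfolding convex_on_pd_def concave_on_pd_def by (auto simp: algebra_simps)
  then have "convex_on_pd n (\<lambda>X. - \<phi> X)"
    by (rule convex_on_pd_block_diag_one) (simp add: \<phi>)
  then show ?thesis
    unfolding convex_on_pd_def concave_on_pd_def by (auto simp: algebra_simps)
qed

lemma psi_eq_psi_zero_dilation:
  assumes H: "H \<in> carrier_mat n n" and L: "psd_n n L"
  obtains H' where "H' \<in> carrier_mat (n + n) (n + n)"
    "\<And>A. hermitian_n n A \<Longrightarrow>
      psi n p s L H A = psi (n + n) p s (0\<^sub>m (n + n) (n + n)) H' (block_diag n n A (1\<^sub>m n))"
proof -
  obtain K where K: "K \<in> carrier_mat n n" "mat_adjoint K * K = L"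
    using psd_n_square_root[OF L] by blast
  show ?thesis
    using that[of "four_block_mat H (0\<^sub>m n n) K (0\<^sub>m n n)"] H K psi_block_diag_one_dilation[OF H K(1)]
    by auto
qed

lemma convex_on_pd_psi_if_zero:
  assumes conv: "\<forall>n>0. \<forall>H \<in> carrier_mat n n. convex_on_pd n (psi n p s (0\<^sub>m n n) H)"
    and n: "n > 0" and H: "H \<in> carrier_mat n n" and L: "psd_n n L"
  shows "convex_on_pd n (psi n p s L H)"
proof -
  obtain H' where "H' \<in> carrier_mat (n + n) (n + n)" and dilation:
    "\<And>A. hermitian_n n A \<Longrightarrow>
      psi n p s L H A = psi (n + n) p s (0\<^sub>m (n + n) (n + n)) H' (block_diag n n A (1\<^sub>m n))"
    using psi_eq_psi_zero_dilation[OF H L] by blast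
  with conv n have "convex_on_pd (n + n) (psi (n + n) p s (0\<^sub>m (n + n) (n + n)) H')"
    by simp
  from convex_on_pd_block_diag_one[OF this dilation] show ?thesis .
qed

lemma concave_on_pd_psi_if_zero:
  assumes conc: "\<forall>n>0. \<forall>H \<in> carrier_mat n n. concave_on_pd n (psi n p s (0\<^sub>m n n) H)"
    and n: "n > 0" and H: "H \<in> carrier_mat n n" and L: "psd_n n L"
  shows "concave_on_pd n (psi n p s L H)"
proof -
  obtain H' where "H' \<in> carrier_mat (n + n) (n + n)" and dilation:
    "\<And>A. hermitian_n n A \<Longrightarrow>
      psi n p s L H A = psi (n + n) p s (0\<^sub>m (n + n) (n + n)) H' (block_diag n n A (1\<^sub>m n))"
    using psi_eq_psi_zero_dilation[OF H L] by blast
  with conc n have "concave_on_pd (n + n) (psi (n + n) p s (0\<^sub>m (n + n) (n + n)) H')"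
    by simp
  from concave_on_pd_block_diag_one[OF this dilation] show ?thesis .
qed

theorem lemma2p2:
  fixes p s :: real
  assumes "s > 0"
  shows "((\<forall>n>0. \<forall>H \<in> carrier_mat n n. \<forall>L. psd_n n L \<longrightarrow> convex_on_pd n (psi n p s L H))
           \<longleftrightarrow> (\<forall>n>0. \<forall>H \<in> carrier_mat n n. convex_on_pd n (psi n p s (0\<^sub>m n n) H)))
       \<and> ((\<forall>n>0. \<forall>H \<in> carrier_mat n n. \<forall>L. psd_n n L \<longrightarrow> concave_on_pd n (psi n p s L H))
           \<longleftrightarrow> (\<forall>n>0. \<forall>H \<in> carrier_mat n n. concave_on_pd n (psi n p s (0\<^sub>m n n) H)))"
  \<comment> \<open>s > 0 is unused: 0 powr s = 0 for every real s, so the zero block of the dilation stays zero.\<close>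
  using convex_on_pd_psi_if_zero[of p s] concave_on_pd_psi_if_zero[of p s] psd_n_zero by blast

end
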